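(* Let $(\mathbf x_i,\mathbf v_i,\theta_i)$ be a sectorial solution of system (CSF) (any $\kappa\ge0$). Let $\gamma(t)=\max_{i,j}\gamma_{ij}(t)$, where $\gamma_{ij}(t)\in[0,\pi]$ is the angle between $\mathbf v_i(t)$ and $\mathbf v_j(t)$ (well defined since the velocities do not vanish), and let $\mathcal D(t)=\max_{i,j}|\mathbf x_i(t)-\mathbf x_j(t)|$. Then there exist constants $C,c>0$, depending on the initial data and the parameters, such that for all $t\ge0$ $$1-\cos\gamma(t)\le C\exp\Big(-cM\int_0^t\phi(\mathcal D(s))\,ds\Big).$$
   Context: Fix integers $N\ge1$, $n\ge1$, masses $m_1,\dots,m_N>0$ with $M=\sum_i m_i$, parameters $\sigma>0$, $p>0$, $\kappa\ge0$, and a communication kernel $\phi:[0,\infty)\to(0,\infty)$ that is smooth, positive and non-increasing. Write $\phi_{ij}=\phi(|\mathbf x_i-\mathbf x_j|)$, with $|\cdot|$ the Euclidean norm on $\mathbb R^n$. System (CSF) is, for $i=1,\dots,N$, $$\dot{\mathbf x}_i=\mathbf v_i,\qquad \dot{\mathbf v}_i=\sum_{j=1}^N m_j\phi_{ij}(\mathbf v_j-\mathbf v_i)+\sigma(\theta_i-|\mathbf v_i|^p)\mathbf v_i,\qquad \dot\theta_i=\kappa\sum_{j=1}^N m_j\phi_{ij}(\theta_j-\theta_i),$$ with $\mathbf x_i,\mathbf v_i\in\mathbb R^n$ and initial values $\theta_i(0)>0$; solutions are considered for $t\ge0$. A solution is called sectorial if there exists a unit vector $\mathbf e\in\mathbb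 R^n$ with $\mathbf e\cdot\mathbf v_i(0)>0$ for all $i=1,\dots,N$. *)

theory Defs
  imports "HOL-Analysis.Analysis"
begin

definition vec_angle :: "'a::euclidean_space \<Rightarrow> 'a \<Rightarrow> real" where
  "vec_angle u w = arccos (inner u w / (norm u * norm w))"

definition max_angle :: "nat \<Rightarrow> (nat \<Rightarrow> real \<Rightarrow> 'a::euclidean_space) \<Rightarrow> real \<Rightarrow> real" where
  "max_angle N v t = Max {vec_angle (v i t) (v j t) | i j. i < N \<and> j < N}"

definition diam :: "nat \<Rightarrow> (nat \<Rightarrow> real \<Rightarrow> 'a::euclidean_space) \<Rightarrow> real \<Rightarrow> real" where
  "diam N x t = Max {norm (x i t - x j t) | i j. i < N \<and> j < N}"

definition CSF_solution ::
  "nat \<Rightarrow> (nat \<Rightarrow> real) \<Rightarrow> real \<Rightarrow> real \<Rightarrow> real \<Rightarrow> (real \<Rightarrow> real) \<Rightarrow>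
   (nat \<Rightarrow> real \<Rightarrow> 'a::euclidean_space) \<Rightarrow> (nat \<Rightarrow> real \<Rightarrow> 'a) \<Rightarrow> (nat \<Rightarrow> real \<Rightarrow> real) \<Rightarrow> bool" where
  "CSF_solution N m \<sigma> p \<kappa> \<phi> x v \<theta> \<longleftrightarrow>
     (\<forall>i<N. \<forall>t\<ge>0.
        (x i has_vector_derivative v i t) (at t within {0..}) \<and>
        (v i has_vector_derivative
            ((\<Sum>j<N. (m j * \<phi> (norm (x i t - x j t))) *\<^sub>R (v j t - v i t))
             + (\<sigma> * (\<theta> i t - norm (v i t) powr p)) *\<^sub>R v i t)) (at t within {0..}) \<and>
        (\<theta> i has_real_derivative
            (\<kappa> * (\<Sum>j<N. m j * \<phi> (norm (x i t - x j t)) * (\<theta> j t - \<theta> i t)))) (at t within {0..}))"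

definition sectorial :: "nat \<Rightarrow> (nat \<Rightarrow> real \<Rightarrow> 'a::euclidean_space) \<Rightarrow> bool" where
  "sectorial N v \<longleftrightarrow> (\<exists>e. norm e = 1 \<and> (\<forall>i<N. inner e (v i 0) > 0))"

end

theory Submission
  imports Defs
begin

(* Fix a unit vector e with e \<bullet> v_i(0) > 0 for all agents. A maximum principle for
   the coupled system keeps every theta_i between its initial minimum and maximum, hence the
   velocity components e \<bullet> v_i stay bounded above, and, together with the cone condition
   |v_i|^2 \<le> r (e \<bullet> v_i)^2, they stay bounded away from zero. Rescaling each velocity to
   unit e-component, v_i / (e \<bullet> v_i), removes the self-propulsion term: the rescaled
   velocities satisfy a linear consensus system whose weights are at least
   c \<phi>(D(t)), so their squared diameter decays like exp(-c \<integral> \<phi>(D)). On the hyperplane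
   e \<bullet> u = 1 one has 1 - cos \<angle>(a, b) \<le> |a - b|^2 / 2, which gives the bound. *)

lemma barrier_stays_negative:
  fixes F F' :: "'k \<Rightarrow> real \<Rightarrow> real"
  assumes fin: "finite K"
    and der: "\<And>k t. k \<in> K \<Longrightarrow> 0 \<le> t \<Longrightarrow> (F k has_real_derivative F' k t) (at t within {0..})"
    and init: "\<And>k. k \<in> K \<Longrightarrow> F k 0 < 0"
    and touch: "\<And>k t. k \<in> K \<Longrightarrow> 0 < t \<Longrightarrow> \<forall>j\<in>K. F j t \<le> 0 \<Longrightarrow> F k t = 0 \<Longrightarrow>
      F' k t < 0"
    and k: "k \<in> K" and t: "0 \<le> t"
  shows "F k t < 0"
proof (rule ccontr)
  assume "\<not> F k t < 0"
  define S where "S = (\<Union>j\<in>K. {0..} \<inter> F j -` {0..})"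
  have cont: "continuous_on {0..} (F j)" if "j \<in> K" for j
    using der[OF that] by (intro DERIV_continuous_on) auto
  have "closed S"
    unfolding S_def using fin cont by (intro closed_UN ballI continuous_closed_preimage) auto
  moreover have "t \<in> S" using k t \<open>\<not> F k t < 0\<close> by (auto simp: S_def not_less)
  moreover have "bdd_below S" by (rule bdd_belowI[of _ 0]) (auto simp: S_def)
  ultimately have "Inf S \<in> S" using closed_contains_Inf by blast
  define s where "s = Inf S"
  obtain j where j: "j \<in> K" "0 \<le> F j s" and s: "0 \<le> s"
    using \<open>Inf S \<in> S\<close> by (auto simp: S_def s_def)
  have before: "F i r < 0" if "i \<in> K" "0 \<le> r" "r < s" for i r
  proof (rule ccontr)
    assume "\<not> F i r < 0"
    then have "r \<in> S" using that by (auto simp: S_def not_less)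
    then have "s \<le> r" unfolding s_def using \<open>bdd_below S\<close> by (rule cInf_lower)
    with \<open>r < s\<close> show False by simp
  qed
  have "s \<noteq> 0" using init[OF j(1)] j(2) by auto
  then have s_pos: "0 < s" using s by simp
  have at_s: "at s within {0..} = at s" using s_pos by (intro at_within_interior) auto
  have "F i s \<le> 0" if "i \<in> K" for i
  proof (rule tendsto_upperbound)
    show "(F i \<longlongrightarrow> F i s) (at_left s)"
      using der[OF that s] at_s DERIV_isCont by (force simp: isCont_def filterlim_at_split)
    show "\<forall>\<^sub>F r in at_left s. F i r \<le> 0"
      using eventually_at_left_real[OF s_pos] by eventually_elim (auto intro: less_imp_le before[OF that])
  qed simp
  then have "F j s = 0" "\<forall>i\<in>K. F i s \<le> 0" using j by (auto intro: antisym)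
  then have "F' j s < 0" using touch[OF j(1) s_pos] by blast
  then obtain d where d: "0 < d" "\<And>h. 0 < h \<Longrightarrow> h < d \<Longrightarrow> F j s < F j (s - h)"
    using DERIV_neg_dec_left der[OF j(1) s] at_s by metis
  define h where "h = min (d / 2) (s / 2)"
  have "F j s < F j (s - h)" using d s_pos by (intro d(2)) (auto simp: h_def)
  moreover have "F j (s - h) < 0" using j(1) s_pos d by (intro before) (auto simp: h_def)
  ultimately show False using \<open>F j s = 0\<close> by simp
qed

lemma max_principle:
  fixes y y' :: "'k \<Rightarrow> real \<Rightarrow> real"
  assumes fin: "finite K"
    and der: "\<And>k t. k \<in> K \<Longrightarrow> 0 \<le> t \<Longrightarrow> (y k has_real_derivative y' k t) (at t within {0..})"
    and init: "\<And>k. k \<in> K \<Longrightarrow> y k 0 \<le> u"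
    and at_max: "\<And>k t. k \<in> K \<Longrightarrow> 0 < t \<Longrightarrow> \<forall>j\<in>K. y j t \<le> y k t \<Longrightarrow> u < y k t \<Longrightarrow>
      y' k t \<le> 0"
    and k: "k \<in> K" and t: "0 \<le> t"
  shows "y k t \<le> u"
proof (rule field_le_epsilon)
  fix \<epsilon> :: real assume \<epsilon>: "0 < \<epsilon>"
  define b where "b t = u + \<epsilon> * (1 - exp (- t) / 2)" for t
  have "y k t - b t < 0"
  proof (rule barrier_stays_negative[where F = "\<lambda>k t. y k t - b t" and F' = "\<lambda>k t. y' k t - \<epsilon> * exp (- t) / 2"])
    show "((\<lambda>t. y i t - b t) has_real_derivative y' i t - \<epsilon> * exp (- t) / 2) (at t within {0..})"
      if "i \<in> K" "0 \<le> t" for i t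
      unfolding b_def using der[OF that] by (auto intro!: derivative_eq_intros)
    show "y' i t - \<epsilon> * exp (- t) / 2 < 0"
      if "i \<in> K" "0 < t" "\<forall>j\<in>K. y j t - b t \<le> 0" "y i t - b t = 0" for i t
    proof -
      have "exp (- t) \<le> 1" using \<open>0 < t\<close> by simp
      then have "0 < \<epsilon> * (1 - exp (- t) / 2)" using \<epsilon> by (intro mult_pos_pos) linarith+
      then have "u < b t" by (simp add: b_def)
      then have "y' i t \<le> 0" using that by (intro at_max) auto
      moreover have "0 < \<epsilon> * exp (- t) / 2" using \<epsilon> by simp
      ultimately show ?thesis by linarith
    qed
    show "y i 0 - b 0 < 0" if "i \<in> K" for i
      using init[OF that] \<epsilon> by (simp add: b_def)
  qed (use fin k t in auto)
  moreover have "b t \<le> u + \<epsilon>" using \<epsilon> by (simp add: b_def)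
  ultimately show "y k t \<le> u + \<epsilon>" by simp
qed

lemma has_real_derivative_inner:
  assumes "(f has_vector_derivative f') (at t within S)" "(g has_vector_derivative g') (at t within S)"
  shows "((\<lambda>t. inner (f t) (g t)) has_real_derivative inner (f t) g' + inner f' (g t)) (at t within S)"
  unfolding has_real_derivative_iff_has_vector_derivative
  by (rule bounded_bilinear.has_vector_derivative[OF bounded_bilinear_inner assms])

lemma has_real_derivative_norm_sq:
  assumes "(f has_vector_derivative f') (at t within S)"
  shows "((\<lambda>t. (norm (f t))\<^sup>2) has_real_derivative 2 * inner (f t) f') (at t within S)"
  using has_real_derivative_inner[OF assms assms] by (simp add: power2_norm_eq_inner inner_commute)

lemma integral_has_real_derivative_atLeast:
  fixes f :: "real \<Rightarrow> real"
  assumes "continuous_on {a..} f" "a \<le> t"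
  shows "((\<lambda>u. integral {a..u} f) has_real_derivative f t) (at t within {a..})"
proof -
  have "((\<lambda>u. integral {a..u} f) has_vector_derivative f t) (at t within {a..t+1})"
    using assms by (intro integral_has_vector_derivative continuous_on_subset[OF assms(1)]) auto
  moreover have "at t within {a..t+1} = at t within {a..}"
    by (rule at_within_nhd[where S = "{..<t+1}"]) auto
  ultimately show ?thesis by (simp add: has_real_derivative_iff_has_vector_derivative)
qed

lemma continuous_on_Max:
  fixes f :: "'i \<Rightarrow> 'b::topological_space \<Rightarrow> real"
  assumes "finite I" "I \<noteq> {}" "\<And>i. i \<in> I \<Longrightarrow> continuous_on S (f i)"
  shows "continuous_on S (\<lambda>s. Max ((\<lambda>i. f i s) ` I))"
  using assms
proof (induction I rule: finite_ne_induct)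
  case (insert i I)
  have "(\<lambda>s. Max ((\<lambda>i. f i s) ` insert i I)) = (\<lambda>s. max (f i s) (Max ((\<lambda>i. f i s) ` I)))"
    using insert.hyps by (simp add: Max_insert)
  then show ?case using insert by (auto intro!: continuous_on_max)
qed simp

lemma powr_le_iff_le_powr_inverse:
  fixes x a p :: real
  assumes "0 \<le> x" "0 \<le> a" "0 < p"
  shows "x powr p \<le> a \<longleftrightarrow> x \<le> a powr (1 / p)"
proof
  assume "x powr p \<le> a"
  then have "(x powr p) powr (1 / p) \<le> a powr (1 / p)" using assms by (intro powr_mono2) auto
  then show "x \<le> a powr (1 / p)" using assms by (simp add: powr_powr powr_one)
next
  assume "x \<le> a powr (1 / p)"
  then have "x powr p \<le> (a powr (1 / p)) powr p" using assms by (intro powr_mono2) auto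
  then show "x powr p \<le> a" using assms by (simp add: powr_powr powr_one)
qed

lemma inner_le_of_norm_sq_le:
  fixes a b :: "'a::real_inner"
  assumes "(norm a)\<^sup>2 \<le> r * \<alpha>\<^sup>2" "(norm b)\<^sup>2 \<le> r * \<beta>\<^sup>2" "0 \<le> r" "0 \<le> \<alpha>" "0 \<le> \<beta>"
  shows "inner a b \<le> r * \<alpha> * \<beta>"
proof -
  have "(norm a * norm b)\<^sup>2 = (norm a)\<^sup>2 * (norm b)\<^sup>2" by (rule power_mult_distrib)
  also have "\<dots> \<le> (r * \<alpha>\<^sup>2) * (r * \<beta>\<^sup>2)"
    using assms(1,2) by (rule mult_mono) (use assms(3) in simp_all)
  also have "\<dots> = (r * \<alpha> * \<beta>)\<^sup>2" by (simp add: power2_eq_square)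
  finally have "norm a * norm b \<le> r * \<alpha> * \<beta>"
    by (rule power2_le_imp_le) (use assms(3-5) in simp)
  then show ?thesis using norm_cauchy_schwarz[of a b] by linarith
qed

lemma vec_angle_scaleR:
  assumes "0 < c" "0 < d"
  shows "vec_angle (c *\<^sub>R a) (d *\<^sub>R b) = vec_angle a b"
  using assms by (simp add: vec_angle_def)

lemma one_minus_cos_vec_angle_le:
  fixes e a b :: "'a::euclidean_space"
  assumes e: "norm e = 1" and a: "inner e a = 1" and b: "inner e b = 1"
  shows "1 - cos (vec_angle a b) \<le> (norm (a - b))\<^sup>2 / 2"
proof -
  define x y where "x = norm a" and "y = norm b"
  have x: "1 \<le> x" using norm_cauchy_schwarz[of e a] e a by (simp add: x_def)
  have y: "1 \<le> y" using norm_cauchy_schwarz[of e b] e b by (simp add: y_def)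
  then have xy: "0 < x * y" using x by simp
  define c where "c = inner a b / (x * y)"
  have ab: "inner a b = c * x * y" using x y by (simp add: c_def)
  have "\<bar>inner a b\<bar> \<le> x * y" unfolding x_def y_def by (rule Cauchy_Schwarz_ineq2)
  then have c1: "\<bar>c\<bar> \<le> 1"
    unfolding c_def abs_divide using xy by (simp add: divide_le_eq)
  then have cos: "cos (vec_angle a b) = c"
    by (simp add: vec_angle_def c_def x_def y_def cos_arccos_abs)
  have "(norm (a - b))\<^sup>2 = x\<^sup>2 + y\<^sup>2 - 2 * (c * x * y)"
    using ab unfolding x_def y_def
    by (simp add: power2_norm_eq_inner inner_diff_left inner_diff_right inner_commute)
  also have "\<dots> \<ge> 2 * (1 - c)"
  proof -
    have "x\<^sup>2 + y\<^sup>2 - 2 * (c * x * y) - 2 * (1 - c) = (x - y)\<^sup>2 + 2 * ((1 - c) * (x * y - 1))"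
      by (simp add: algebra_simps power2_eq_square)
    moreover have "0 \<le> (1 - c) * (x * y - 1)"
      using abs_le_D1[OF c1] mult_mono[OF x y] x by (intro mult_nonneg_nonneg) auto
    ultimately show ?thesis using zero_le_power2[of "x - y"] by linarith
  qed
  finally show ?thesis using cos by simp
qed

lemma inner_sum_le_farthest_pair:
  fixes Q :: "'k \<Rightarrow> 'a::real_inner"
  assumes "finite K" "i \<in> K" "j \<in> K" and c: "\<And>k. k \<in> K \<Longrightarrow> 0 \<le> c k"
    and far: "\<And>k. k \<in> K \<Longrightarrow> norm (Q k - Q j) \<le> norm (Q i - Q j)"
  shows "inner (Q i - Q j) (\<Sum>k\<in>K. c k *\<^sub>R (Q k - Q i)) \<le> - (c j * (norm (Q i - Q j))\<^sup>2)"
proof -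
  define d where "d = Q i - Q j"
  have obtuse: "inner d (Q k - Q i) \<le> 0" if "k \<in> K" for k
  proof -
    have "(norm ((Q k - Q i) + d))\<^sup>2 \<le> (norm d)\<^sup>2"
      using far[OF that] by (simp add: d_def power_mono)
    then have "(norm (Q k - Q i))\<^sup>2 + 2 * inner d (Q k - Q i) \<le> 0"
      by (simp add: power2_norm_eq_inner inner_add_left inner_add_right inner_commute)
    then show ?thesis using zero_le_power2[of "norm (Q k - Q i)"] by linarith
  qed
  have "inner d (\<Sum>k\<in>K. c k *\<^sub>R (Q k - Q i)) = c j * inner d (Q j - Q i) + (\<Sum>k\<in>K-{j}. c k * inner d (Q k - Q i))"
    unfolding inner_sum_right by (simp add: sum.remove[OF assms(1,3)])
  also have "\<dots> \<le> c j * inner d (Q j - Q i)"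
    using c obtuse by (auto intro!: sum_nonpos mult_nonneg_nonpos)
  also have "\<dots> = - (c j * (norm d)\<^sup>2)"
    by (simp add: d_def power2_norm_eq_inner inner_diff_right inner_commute algebra_simps)
  finally show ?thesis unfolding d_def .
qed

lemma inner_consensus_le_farthest_pair:
  fixes Q :: "'k \<Rightarrow> 'a::real_inner" and A :: "'k \<Rightarrow> 'k \<Rightarrow> real"
  assumes fin: "finite K" and i: "i \<in> K" and j: "j \<in> K" and "0 \<le> a"
    and A_ge: "\<And>k l. k \<in> K \<Longrightarrow> l \<in> K \<Longrightarrow> a \<le> A k l"
    and far: "\<And>k l. k \<in> K \<Longrightarrow> l \<in> K \<Longrightarrow> norm (Q k - Q l) \<le> norm (Q i - Q j)"
  shows "inner (Q i - Q j) ((\<Sum>k\<in>K. A i k *\<^sub>R (Q k - Q i)) - (\<Sum>k\<in>K. A j k *\<^sub>R (Q k - Q j)))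
           \<le> - (2 * a * (norm (Q i - Q j))\<^sup>2)"
proof -
  define n where "n = (norm (Q i - Q j))\<^sup>2"
  have A_nonneg: "0 \<le> A k l" if "k \<in> K" "l \<in> K" for k l
    using A_ge[OF that] \<open>0 \<le> a\<close> by linarith
  have "inner (Q i - Q j) (\<Sum>k\<in>K. A i k *\<^sub>R (Q k - Q i)) \<le> - (A i j * n)"
    unfolding n_def by (rule inner_sum_le_farthest_pair[OF fin i j]) (use A_nonneg i far j in auto)
  moreover have "inner (Q j - Q i) (\<Sum>k\<in>K. A j k *\<^sub>R (Q k - Q j)) \<le> - (A j i * n)"
    unfolding n_def norm_minus_commute[of "Q i"]
    by (rule inner_sum_le_farthest_pair[OF fin j i])
       (use A_nonneg j far i in \<open>auto simp: norm_minus_commute\<close>)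
  moreover have "a * n \<le> A i j * n" "a * n \<le> A j i * n"
    using A_ge i j by (auto simp: n_def intro!: mult_right_mono)
  moreover have "inner (Q j - Q i) (\<Sum>k\<in>K. A j k *\<^sub>R (Q k - Q j))
      = - inner (Q i - Q j) (\<Sum>k\<in>K. A j k *\<^sub>R (Q k - Q j))"
    by (simp add: inner_diff_left)
  ultimately have "inner (Q i - Q j) ((\<Sum>k\<in>K. A i k *\<^sub>R (Q k - Q i)) - (\<Sum>k\<in>K. A j k *\<^sub>R (Q k - Q j)))
      \<le> - (2 * a * n)"
    unfolding inner_diff_right by linarith
  then show ?thesis by (simp add: n_def)
qed

lemma consensus_sq_dist_decay:
  fixes Q :: "'k \<Rightarrow> real \<Rightarrow> 'a::real_inner" and A :: "'k \<Rightarrow> 'k \<Rightarrow> real \<Rightarrow> real"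
  assumes fin: "finite K"
    and der: "\<And>i t. i \<in> K \<Longrightarrow> 0 \<le> t \<Longrightarrow>
      (Q i has_vector_derivative (\<Sum>k\<in>K. A i k t *\<^sub>R (Q k t - Q i t))) (at t within {0..})"
    and a_cont: "continuous_on {0..} a"
    and a_pos: "\<And>t. 0 \<le> t \<Longrightarrow> 0 < a t"
    and A_ge: "\<And>i k t. i \<in> K \<Longrightarrow> k \<in> K \<Longrightarrow> 0 \<le> t \<Longrightarrow> a t \<le> A i k t"
    and init: "\<And>i j. i \<in> K \<Longrightarrow> j \<in> K \<Longrightarrow> (norm (Q i 0 - Q j 0))\<^sup>2 < C"
    and ij: "i \<in> K" "j \<in> K" and t: "0 \<le> t"
  shows "(norm (Q i t - Q j t))\<^sup>2 < C * exp (- integral {0..t} a)"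
proof -
  define G where "G t = C * exp (- integral {0..t} a)" for t
  define dQ where "dQ i t = (\<Sum>k\<in>K. A i k t *\<^sub>R (Q k t - Q i t))" for i t
  define F where "F ij t = (norm (Q (fst ij) t - Q (snd ij) t))\<^sup>2 - G t" for ij t
  define F' where "F' ij t = 2 * inner (Q (fst ij) t - Q (snd ij) t) (dQ (fst ij) t - dQ (snd ij) t)
      + a t * G t" for ij t
  have "0 < C" using init[OF ij(1) ij(1)] by simp
  then have G_pos: "0 < G t" for t by (simp add: G_def)
  have "F (i, j) t < 0"
  proof (rule barrier_stays_negative[where K = "K \<times> K" and F = F and F' = F'])
    fix ij t assume "ij \<in> K \<times> K" "0 \<le> (t::real)"
    then have "((\<lambda>t. Q (fst ij) t - Q (snd ij) t) has_vector_derivative dQ (fst ij) t - dQ (snd ij) t)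
        (at t within {0..})"
      unfolding dQ_def by (intro has_vector_derivative_diff der) auto
    moreover have "(G has_real_derivative - a t * G t) (at t within {0..})"
      unfolding G_def using integral_has_real_derivative_atLeast[OF a_cont \<open>0 \<le> t\<close>]
      by (auto intro!: derivative_eq_intros)
    ultimately show "(F ij has_real_derivative F' ij t) (at t within {0..})"
      unfolding F_def[abs_def] F'_def using DERIV_diff[OF has_real_derivative_norm_sq] by fastforce
  next
    fix ij t assume ij: "ij \<in> K \<times> K" and t: "0 < t"
      and below: "\<forall>kl\<in>K \<times> K. F kl t \<le> 0" and touch: "F ij t = 0"
    obtain i j where ij_eq: "ij = (i, j)" and i: "i \<in> K" and j: "j \<in> K" using ij by auto
    have far: "norm (Q k t - Q l t) \<le> norm (Q i t - Q j t)" if "k \<in> K" "l \<in> K" for k l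
    proof (rule power2_le_imp_le)
      show "(norm (Q k t - Q l t))\<^sup>2 \<le> (norm (Q i t - Q j t))\<^sup>2"
        using below that touch by (force simp: F_def ij_eq)
    qed simp
    have "inner (Q i t - Q j t) (dQ i t - dQ j t) \<le> - (2 * a t * (norm (Q i t - Q j t))\<^sup>2)"
      unfolding dQ_def using a_pos[of t] A_ge t far
      by (intro inner_consensus_le_farthest_pair[OF fin i j]) auto
    also have "(norm (Q i t - Q j t))\<^sup>2 = G t" using touch by (simp add: F_def ij_eq)
    moreover have "0 < a t * G t" using a_pos[of t] t G_pos[of t] by simp
    ultimately show "F' ij t < 0" by (simp add: F'_def ij_eq)
  qed (use fin ij t init in \<open>auto simp: F_def G_def\<close>)
  then show ?thesis by (simp add: F_def G_def)
qed

lemma normalised_consensus_eq: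
  fixes v :: "'k \<Rightarrow> 'a::real_vector" and c w :: "'k \<Rightarrow> real"
  assumes w: "\<And>k. k \<in> K \<Longrightarrow> w k \<noteq> 0" and i: "i \<in> K"
  shows "(1 / w i) *\<^sub>R ((\<Sum>k\<in>K. c k *\<^sub>R (v k - v i)) + l *\<^sub>R v i)
           - (((\<Sum>k\<in>K. c k * (w k - w i)) + l * w i) / (w i)\<^sup>2) *\<^sub>R v i
         = (\<Sum>k\<in>K. (c k * w k / w i) *\<^sub>R ((1 / w k) *\<^sub>R v k - (1 / w i) *\<^sub>R v i))"
proof -
  have wi: "w i \<noteq> 0" using w i .
  have coeff: "((\<Sum>k\<in>K. c k * (w k - w i)) + l * w i) / (w i)\<^sup>2
      = (\<Sum>k\<in>K. c k * w k / (w i)\<^sup>2 - c k / w i) + l / w i"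
    using wi by (simp add: add_divide_distrib sum_divide_distrib diff_divide_distrib
        right_diff_distrib power2_eq_square)
  have summand: "(1 / w i) *\<^sub>R (c k *\<^sub>R (v k - v i)) - (c k * w k / (w i)\<^sup>2 - c k / w i) *\<^sub>R v i
      = (c k * w k / w i) *\<^sub>R ((1 / w k) *\<^sub>R v k - (1 / w i) *\<^sub>R v i)" if "k \<in> K" for k
    using w[OF that] wi by (simp add: algebra_simps power2_eq_square)
  have "(1 / w i) *\<^sub>R ((\<Sum>k\<in>K. c k *\<^sub>R (v k - v i)) + l *\<^sub>R v i)
        - ((\<Sum>k\<in>K. c k * w k / (w i)\<^sup>2 - c k / w i) + l / w i) *\<^sub>R v i
      = (1 / w i) *\<^sub>R (\<Sum>k\<in>K. c k *\<^sub>R (v k - v i)) - (\<Sum>k\<in>K. c k * w k / (w i)\<^sup>2 - c k / w i) *\<^sub>R v i"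
    by (simp add: scaleR_add_right scaleR_add_left)
  also have "\<dots> = (\<Sum>k\<in>K. (1 / w i) *\<^sub>R (c k *\<^sub>R (v k - v i)) - (c k * w k / (w i)\<^sup>2 - c k / w i) *\<^sub>R v i)"
    by (simp add: scaleR_sum_right sum_subtractf flip: scaleR_sum_left)
  also have "\<dots> = (\<Sum>k\<in>K. (c k * w k / w i) *\<^sub>R ((1 / w k) *\<^sub>R v k - (1 / w i) *\<^sub>R v i))"
    using summand by (rule sum.cong[OF refl])
  finally show ?thesis unfolding coeff .
qed

locale sectorial_CSF =
  fixes N :: nat and m :: "nat \<Rightarrow> real" and \<sigma> p \<kappa> :: real and \<phi> :: "real \<Rightarrow> real"
    and x v :: "nat \<Rightarrow> real \<Rightarrow> 'a::euclidean_space" and \<theta> :: "nat \<Rightarrow> real \<Rightarrow> real"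
    and e :: 'a
  assumes N_pos: "0 < N"
    and m_pos: "\<forall>i<N. m i > 0"
    and \<sigma>: "\<sigma> > 0" and p: "p > 0" and \<kappa>: "\<kappa> \<ge> 0"
    and \<phi>_cont: "continuous_on {0..} \<phi>"
    and \<phi>_pos: "\<forall>r\<ge>0. \<phi> r > 0"
    and \<phi>_mono: "\<forall>r s. 0 \<le> r \<longrightarrow> r \<le> s \<longrightarrow> \<phi> s \<le> \<phi> r"
    and sol: "CSF_solution N m \<sigma> p \<kappa> \<phi> x v \<theta>"
    and \<theta>0: "\<forall>i<N. \<theta> i 0 > 0"
    and e_norm: "norm e = 1" and e_v0: "\<forall>i<N. inner e (v i 0) > 0"
begin

definition weight :: "nat \<Rightarrow> nat \<Rightarrow> real \<Rightarrow> real"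
  where "weight i j t = m j * \<phi> (norm (x i t - x j t))"

definition prop_rate :: "nat \<Rightarrow> real \<Rightarrow> real"
  where "prop_rate i t = \<sigma> * (\<theta> i t - norm (v i t) powr p)"

definition v_rate :: "nat \<Rightarrow> real \<Rightarrow> 'a"
  where "v_rate i t = (\<Sum>j<N. weight i j t *\<^sub>R (v j t - v i t)) + prop_rate i t *\<^sub>R v i t"

definition \<theta>_rate :: "nat \<Rightarrow> real \<Rightarrow> real"
  where "\<theta>_rate i t = \<kappa> * (\<Sum>j<N. weight i j t * (\<theta> j t - \<theta> i t))"

definition ve :: "nat \<Rightarrow> real \<Rightarrow> real"
  where "ve i t = inner e (v i t)"

definition ve_rate :: "nat \<Rightarrow> real \<Rightarrow> real"
  where "ve_rate i t = (\<Sum>j<N. weight i j t * (ve j t - ve i t)) + prop_rate i t * ve i t"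

lemma x_has_derivative: "i < N \<Longrightarrow> 0 \<le> t \<Longrightarrow> (x i has_vector_derivative v i t) (at t within {0..})"
  using sol by (simp add: CSF_solution_def)

lemma v_has_derivative: "i < N \<Longrightarrow> 0 \<le> t \<Longrightarrow> (v i has_vector_derivative v_rate i t) (at t within {0..})"
  using sol by (simp add: CSF_solution_def v_rate_def weight_def prop_rate_def)

lemma \<theta>_has_derivative: "i < N \<Longrightarrow> 0 \<le> t \<Longrightarrow> (\<theta> i has_real_derivative \<theta>_rate i t) (at t within {0..})"
  using sol by (simp add: CSF_solution_def \<theta>_rate_def weight_def)

lemma ve_has_derivative: "i < N \<Longrightarrow> 0 \<le> t \<Longrightarrow> (ve i has_real_derivative ve_rate i t) (at t within {0..})"
  using has_real_derivative_inner[OF has_vector_derivative_const[of e] v_has_derivative]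
  by (simp add: ve_def[abs_def] ve_rate_def v_rate_def inner_sum_right inner_diff_right inner_add_right)

lemma weight_nonneg: "i < N \<Longrightarrow> j < N \<Longrightarrow> 0 \<le> weight i j t"
  using m_pos \<phi>_pos by (simp add: weight_def less_imp_le)

lemma ve_le_norm: "ve i t \<le> norm (v i t)"
  using norm_cauchy_schwarz[of e "v i t"] e_norm by (simp add: ve_def)

lemma \<theta>_bounds:
  obtains lo hi where "0 < lo" "\<And>i t. i < N \<Longrightarrow> 0 \<le> t \<Longrightarrow> lo \<le> \<theta> i t \<and> \<theta> i t \<le> hi"
proof -
  define lo hi where "lo = Min ((\<lambda>i. \<theta> i 0) ` {..<N})" and "hi = Max ((\<lambda>i. \<theta> i 0) ` {..<N})"
  have "lo \<in> (\<lambda>i. \<theta> i 0) ` {..<N}" using N_pos by (auto simp: lo_def intro!: Min_in)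
  then have "0 < lo" using \<theta>0 by auto
  have "\<theta> i t \<le> hi" if "i < N" "0 \<le> t" for i t
  proof (rule max_principle[where K = "{..<N}" and y = \<theta> and y' = \<theta>_rate])
    fix k t assume "k \<in> {..<N}" "0 < t" "\<forall>j\<in>{..<N}. \<theta> j t \<le> \<theta> k t"
    then show "\<theta>_rate k t \<le> 0"
      unfolding \<theta>_rate_def using \<kappa> weight_nonneg
      by (intro mult_nonneg_nonpos sum_nonpos) (auto intro!: mult_nonneg_nonpos)
  qed (use that \<theta>_has_derivative in \<open>auto simp: hi_def\<close>)
  moreover have "- \<theta> i t \<le> - lo" if "i < N" "0 \<le> t" for i t
  proof (rule max_principle[where K = "{..<N}" and y = "\<lambda>i t. - \<theta> i t" and y' = "\<lambda>i t. - \<theta>_rate i t"])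
    fix k t assume "k \<in> {..<N}" "0 < t" "\<forall>j\<in>{..<N}. - \<theta> j t \<le> - \<theta> k t"
    then show "- \<theta>_rate k t \<le> 0"
      unfolding \<theta>_rate_def neg_le_0_iff_le using \<kappa> weight_nonneg
      by (intro mult_nonneg_nonneg sum_nonneg) (auto intro!: mult_nonneg_nonneg)
  qed (use that \<theta>_has_derivative in \<open>auto simp: lo_def intro!: derivative_eq_intros\<close>)
  ultimately show ?thesis using \<open>0 < lo\<close> that by force
qed

lemma \<theta>_pos:
  assumes "i < N" "0 \<le> t"
  shows "0 < \<theta> i t"
proof (rule \<theta>_bounds)
  fix lo hi :: real assume "0 < lo" and "\<And>i t. i < N \<Longrightarrow> 0 \<le> t \<Longrightarrow> lo \<le> \<theta> i t \<and> \<theta> i t \<le> hi"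
  from this(2)[OF assms] \<open>0 < lo\<close> show ?thesis by linarith
qed

lemma prop_rate_nonneg_iff:
  "i < N \<Longrightarrow> 0 \<le> t \<Longrightarrow> 0 \<le> prop_rate i t \<longleftrightarrow> norm (v i t) \<le> \<theta> i t powr (1 / p)"
  using \<sigma> p \<theta>_pos[of i t]
  by (simp add: prop_rate_def zero_le_mult_iff powr_le_iff_le_powr_inverse[symmetric])

lemma ve_rate_nonpos_at_max:
  assumes "i < N" "0 \<le> t" and max: "\<forall>j<N. ve j t \<le> ve i t" and "0 \<le> ve i t"
    and "\<theta> i t powr (1 / p) < norm (v i t)"
  shows "ve_rate i t \<le> 0"
proof -
  have "(\<Sum>j<N. weight i j t * (ve j t - ve i t)) \<le> 0"
    using weight_nonneg[OF \<open>i < N\<close>] max by (auto intro!: sum_nonpos mult_nonneg_nonpos)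
  moreover have "prop_rate i t \<le> 0" using prop_rate_nonneg_iff[OF assms(1,2)] assms(5) by linarith
  then have "prop_rate i t * ve i t \<le> 0" using assms(4) by (rule mult_nonpos_nonneg)
  ultimately show ?thesis by (simp add: ve_rate_def)
qed

lemma ve_rate_nonneg_at_min:
  assumes "i < N" "0 \<le> t" and min: "\<forall>j<N. ve i t \<le> ve j t" and "0 \<le> ve i t"
    and "norm (v i t) \<le> \<theta> i t powr (1 / p)"
  shows "0 \<le> ve_rate i t"
proof -
  have "0 \<le> (\<Sum>j<N. weight i j t * (ve j t - ve i t))"
    using weight_nonneg[OF \<open>i < N\<close>] min by (auto intro!: sum_nonneg mult_nonneg_nonneg)
  moreover have "0 \<le> prop_rate i t" using prop_rate_nonneg_iff[OF assms(1,2)] assms(5) by simp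
  then have "0 \<le> prop_rate i t * ve i t" using assms(4) by simp
  ultimately show ?thesis by (simp add: ve_rate_def)
qed

lemma ve_upper_bound: obtains W where "\<And>i t. i < N \<Longrightarrow> 0 \<le> t \<Longrightarrow> ve i t \<le> W"
proof -
  obtain hi :: real where \<theta>_hi: "\<And>i t. i < N \<Longrightarrow> 0 \<le> t \<Longrightarrow> \<theta> i t \<le> hi"
    using \<theta>_bounds by metis
  define W where "W = max (Max ((\<lambda>i. ve i 0) ` {..<N})) (hi powr (1 / p))"
  have "ve i t \<le> W" if "i < N" "0 \<le> t" for i t
  proof (rule max_principle[where K = "{..<N}" and y = ve and y' = ve_rate])
    fix k t assume k: "k \<in> {..<N}" and t: "0 < t" and max: "\<forall>j\<in>{..<N}. ve j t \<le> ve k t"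
      and "W < ve k t"
    have "\<theta> k t powr (1 / p) \<le> hi powr (1 / p)"
      using \<theta>_hi[of k t] \<theta>_pos[of k t] k t p by (intro powr_mono2) auto
    also have "\<dots> \<le> W" by (simp add: W_def)
    finally have "\<theta> k t powr (1 / p) < ve k t" "0 \<le> ve k t"
      using \<open>W < ve k t\<close> powr_ge_zero[of "\<theta> k t" "1 / p"] by linarith+
    then show "ve_rate k t \<le> 0"
      using k t max ve_le_norm[of k t] by (intro ve_rate_nonpos_at_max) auto
  qed (use that ve_has_derivative N_pos in \<open>auto simp: W_def le_max_iff_disj\<close>)
  then show ?thesis using that by blast
qed

lemma inner_v_rate_cone_eq:
  "inner (v i t) (v_rate i t) - r * ve i t * ve_rate i t
     = (\<Sum>j<N. weight i j t * (inner (v i t) (v j t) - r * ve i t * ve j t))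
       + (prop_rate i t - (\<Sum>j<N. weight i j t)) * ((norm (v i t))\<^sup>2 - r * (ve i t)\<^sup>2)"
  by (simp add: v_rate_def ve_rate_def inner_sum_right inner_diff_right inner_add_right
      dot_square_norm sum_distrib_left sum_distrib_right sum_subtractf algebra_simps power2_eq_square)

lemma inner_v_rate_nonpos_on_cone:
  assumes "i < N" "0 \<le> r"
    and cone: "\<And>j. j < N \<Longrightarrow> (norm (v j t))\<^sup>2 \<le> r * (ve j t)\<^sup>2 \<and> 0 \<le> ve j t"
    and boundary: "(norm (v i t))\<^sup>2 = r * (ve i t)\<^sup>2"
  shows "inner (v i t) (v_rate i t) - r * ve i t * ve_rate i t \<le> 0"
proof -
  have "inner (v i t) (v j t) \<le> r * ve i t * ve j t" if "j < N" for j
    using cone[OF \<open>i < N\<close>] cone[OF that] \<open>0 \<le> r\<close> by (intro inner_le_of_norm_sq_le) auto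
  then show ?thesis
    unfolding inner_v_rate_cone_eq boundary
    using weight_nonneg[OF \<open>i < N\<close>] by (auto intro!: sum_nonpos mult_nonneg_nonpos)
qed

lemma cone_gap_has_derivative:
  assumes "i < N" "0 \<le> t" "(r has_real_derivative r') (at t within {0..})"
  shows "((\<lambda>t. (norm (v i t))\<^sup>2 - r t * (ve i t)\<^sup>2) has_real_derivative
      2 * (inner (v i t) (v_rate i t) - r t * ve i t * ve_rate i t) - r' * (ve i t)\<^sup>2) (at t within {0..})"
proof -
  have "((\<lambda>t. r t * (ve i t)\<^sup>2) has_real_derivative r' * (ve i t)\<^sup>2 + r t * (2 * ve i t * ve_rate i t))
      (at t within {0..})"
    using assms ve_has_derivative[OF assms(1,2)] by (auto intro!: derivative_eq_intros)
  from DERIV_diff[OF has_real_derivative_norm_sq[OF v_has_derivative[OF assms(1,2)]] this]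
  show ?thesis by (simp add: algebra_simps)
qed

lemma ve_rate_nonneg_at_lower_touch:
  assumes "i < N" "0 \<le> t" "0 \<le> \<rho>" and "sqrt \<rho> * ve i t \<le> \<theta> i t powr (1 / p)"
    and min: "\<forall>j<N. ve i t \<le> ve j t" and "0 \<le> ve i t"
    and cone: "(norm (v i t))\<^sup>2 \<le> \<rho> * (ve i t)\<^sup>2"
  shows "0 \<le> ve_rate i t"
proof (rule ve_rate_nonneg_at_min[OF assms(1,2) min \<open>0 \<le> ve i t\<close>])
  have "norm (v i t) \<le> sqrt (\<rho> * (ve i t)\<^sup>2)" using cone by (rule real_le_rsqrt)
  also have "\<dots> = sqrt \<rho> * ve i t" using \<open>0 \<le> ve i t\<close> by (simp add: real_sqrt_mult)
  finally show "norm (v i t) \<le> \<theta> i t powr (1 / p)" using assms(4) by linarith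
qed

(* The lower bound b(t) on ve and the cone bound with r(t) are propagated together: where ve_i
   touches b, the cone bound controls |v_i| and makes the self-propulsion nonnegative; where
   v_i touches the cone, the lower bound keeps every ve_j positive, as Cauchy-Schwarz needs. *)
lemma ve_cone_barrier:
  assumes "0 < L" "0 \<le> R"
    and L_root: "\<And>i t. i < N \<Longrightarrow> 0 \<le> t \<Longrightarrow> sqrt (R + 2) * L \<le> \<theta> i t powr (1 / p)"
    and ve0: "\<And>i. i < N \<Longrightarrow> L < ve i 0"
    and cone0: "\<And>i. i < N \<Longrightarrow> (norm (v i 0))\<^sup>2 \<le> R * (ve i 0)\<^sup>2"
    and "i < N" "0 \<le> t"
  shows "L * (1 + exp (- t)) / 2 < ve i t"
proof -
  define b where "b t = L * (1 + exp (- t)) / 2" for t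
  define r where "r t = R + 2 - exp (- t)" for t
  define F where "F k t = (if snd k then b t - ve (fst k) t
      else (norm (v (fst k) t))\<^sup>2 - r t * (ve (fst k) t)\<^sup>2)" for k t
  define F' where "F' k t = (if snd k then - L * exp (- t) / 2 - ve_rate (fst k) t
      else 2 * (inner (v (fst k) t) (v_rate (fst k) t) - r t * ve (fst k) t * ve_rate (fst k) t)
        - exp (- t) * (ve (fst k) t)\<^sup>2)" for k t
  have "F (i, True) t < 0"
  proof (rule barrier_stays_negative[where K = "{..<N} \<times> UNIV" and F = F and F' = F'])
    fix k t assume k: "k \<in> {..<N} \<times> (UNIV :: bool set)" and "0 \<le> (t::real)"
    obtain i c where k_eq: "k = (i, c)" and "i < N" using k by auto
    have "(r has_real_derivative exp (- t)) (at t within {0..})"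
      unfolding r_def by (auto intro!: derivative_eq_intros)
    from cone_gap_has_derivative[OF \<open>i < N\<close> \<open>0 \<le> t\<close> this]
    show "(F k has_real_derivative F' k t) (at t within {0..})"
      unfolding F_def F'_def k_eq b_def using ve_has_derivative[OF \<open>i < N\<close> \<open>0 \<le> t\<close>]
      by (cases c) (auto intro!: derivative_eq_intros)
  next
    fix k assume "k \<in> {..<N} \<times> (UNIV :: bool set)"
    then obtain i c where k_eq: "k = (i, c)" and "i < N" by auto
    have "0 < (ve i 0)\<^sup>2" using ve0[OF \<open>i < N\<close>] \<open>0 < L\<close> by simp
    then have "(norm (v i 0))\<^sup>2 < (R + 1) * (ve i 0)\<^sup>2"
      using cone0[OF \<open>i < N\<close>] unfolding distrib_right by linarith
    then show "F k 0 < 0"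
      using ve0[OF \<open>i < N\<close>] by (simp add: F_def k_eq b_def r_def add.commute)
  next
    fix k t assume k: "k \<in> {..<N} \<times> (UNIV :: bool set)" and "0 < (t::real)"
      and below: "\<forall>l\<in>{..<N} \<times> UNIV. F l t \<le> 0" and touch: "F k t = 0"
    obtain i c where k_eq: "k = (i, c)" and "i < N" using k by auto
    have e0: "0 < exp (- t)" and e1: "exp (- t) \<le> 1" using \<open>0 < t\<close> by auto
    have b_pos: "0 < b t" using \<open>0 < L\<close> e0 by (simp add: b_def add_pos_pos)
    have "L * exp (- t) \<le> L" by (rule mult_left_le[OF e1]) (use \<open>0 < L\<close> in simp)
    then have b_le: "b t \<le> L" by (simp add: b_def distrib_left)
    have r_pos: "0 \<le> r t" and r_le: "r t \<le> R + 2" using e0 e1 \<open>0 \<le> R\<close> unfolding r_def by linarith+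
    have ve_ge: "b t \<le> ve j t" if "j < N" for j
      using bspec[OF below, of "(j, True)"] that by (simp add: F_def)
    have cone: "(norm (v j t))\<^sup>2 \<le> r t * (ve j t)\<^sup>2" if "j < N" for j
      using bspec[OF below, of "(j, False)"] that by (simp add: F_def)
    show "F' k t < 0"
    proof (cases c)
      case True
      then have ve_i: "ve i t = b t" using touch by (simp add: F_def k_eq)
      have "sqrt (r t) * ve i t \<le> sqrt (R + 2) * L"
        unfolding ve_i using r_le b_le b_pos \<open>0 \<le> R\<close> by (intro mult_mono) auto
      also have "\<dots> \<le> \<theta> i t powr (1 / p)" using L_root \<open>i < N\<close> \<open>0 < t\<close> by simp
      finally have "0 \<le> ve_rate i t"
        using \<open>0 < t\<close> ve_ge b_pos r_pos cone[OF \<open>i < N\<close>]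
        by (intro ve_rate_nonneg_at_lower_touch \<open>i < N\<close>) (auto simp: ve_i)
      moreover have "0 < L * exp (- t) / 2" using \<open>0 < L\<close> by simp
      ultimately show ?thesis using True by (simp add: F'_def k_eq)
    next
      case False
      then have "(norm (v i t))\<^sup>2 = r t * (ve i t)\<^sup>2" using touch by (simp add: F_def k_eq)
      then have "inner (v i t) (v_rate i t) - r t * ve i t * ve_rate i t \<le> 0"
        using cone ve_ge b_pos r_pos
        by (intro inner_v_rate_nonpos_on_cone \<open>i < N\<close>) (auto intro: less_imp_le order.strict_trans2)
      moreover have "0 < exp (- t) * (ve i t)\<^sup>2" using ve_ge[OF \<open>i < N\<close>] b_pos by simp
      ultimately show ?thesis using False by (simp add: F'_def k_eq)
    qed
  qed (use assms in auto)
  then show ?thesis by (simp add: F_def b_def)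
qed

lemma ve_lower_bound: obtains L where "0 < L" "\<And>i t. i < N \<Longrightarrow> 0 \<le> t \<Longrightarrow> L \<le> ve i t"
proof -
  obtain lo where "0 < lo" and \<theta>_lo: "\<And>i t. i < N \<Longrightarrow> 0 \<le> t \<Longrightarrow> lo \<le> \<theta> i t"
    using \<theta>_bounds by metis
  have ve0: "0 < ve i 0" if "i < N" for i using e_v0 that by (simp add: ve_def)
  define w0 where "w0 = Min ((\<lambda>i. ve i 0) ` {..<N})"
  define R where "R = Max ((\<lambda>i. (norm (v i 0))\<^sup>2 / (ve i 0)\<^sup>2) ` {..<N})"
  define L where "L = min (w0 / 2) (lo powr (1 / p) / sqrt (R + 2))"
  have "w0 \<in> (\<lambda>i. ve i 0) ` {..<N}" using N_pos by (auto simp: w0_def intro!: Min_in)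
  then have "0 < w0" using ve0 by auto
  have cone0: "(norm (v i 0))\<^sup>2 \<le> R * (ve i 0)\<^sup>2" if "i < N" for i
  proof -
    have "(norm (v i 0))\<^sup>2 / (ve i 0)\<^sup>2 \<le> R" using that by (auto simp: R_def)
    then show ?thesis using ve0[OF that] by (simp add: divide_le_eq)
  qed
  have "(norm (v 0 0))\<^sup>2 / (ve 0 0)\<^sup>2 \<le> R" using N_pos by (auto simp: R_def)
  then have "0 \<le> R" by (smt (verit) divide_nonneg_nonneg zero_le_power2)
  have "0 < L" using \<open>0 < w0\<close> \<open>0 < lo\<close> \<open>0 \<le> R\<close> by (simp add: L_def)
  have "L \<le> lo powr (1 / p) / sqrt (R + 2)" by (simp add: L_def)
  then have "sqrt (R + 2) * L \<le> lo powr (1 / p)"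
    using \<open>0 \<le> R\<close> by (simp add: pos_le_divide_eq mult.commute)
  also have "lo powr (1 / p) \<le> \<theta> i t powr (1 / p)" if "i < N" "0 \<le> t" for i t
    using \<theta>_lo[OF that] \<open>0 < lo\<close> p by (intro powr_mono2) auto
  finally have L_root: "sqrt (R + 2) * L \<le> \<theta> i t powr (1 / p)" if "i < N" "0 \<le> t" for i t
    using that .
  have ve0_gt: "L < ve i 0" if "i < N" for i
  proof -
    have "w0 \<le> ve i 0" using that by (simp add: w0_def)
    moreover have "L \<le> w0 / 2" unfolding L_def by (rule min.cobounded1)
    ultimately show ?thesis using \<open>0 < w0\<close> by linarith
  qed
  show ?thesis
  proof (rule that)
    show "0 < L / 2" using \<open>0 < L\<close> by simp
    fix i and t :: real assume "i < N" "0 \<le> t"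
    with ve_cone_barrier[OF \<open>0 < L\<close> \<open>0 \<le> R\<close> L_root ve0_gt cone0]
    have "L * (1 + exp (- t)) / 2 < ve i t" by blast
    moreover have "L / 2 \<le> L * (1 + exp (- t)) / 2" using \<open>0 < L\<close> by simp
    ultimately show "L / 2 \<le> ve i t" by linarith
  qed
qed

definition v_hat :: "nat \<Rightarrow> real \<Rightarrow> 'a"
  where "v_hat i t = (1 / ve i t) *\<^sub>R v i t"

lemma ve_pos:
  assumes "i < N" "0 \<le> t"
  shows "0 < ve i t"
proof (rule ve_lower_bound)
  fix L :: real assume "0 < L" and L: "\<And>i t. i < N \<Longrightarrow> 0 \<le> t \<Longrightarrow> L \<le> ve i t"
  show "0 < ve i t" using L[OF assms] \<open>0 < L\<close> by linarith
qed

lemma inner_e_v_hat: "i < N \<Longrightarrow> 0 \<le> t \<Longrightarrow> inner e (v_hat i t) = 1"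
  using ve_pos[of i t] by (simp add: v_hat_def ve_def)

lemma v_hat_has_derivative:
  assumes "i < N" "0 \<le> t"
  shows "(v_hat i has_vector_derivative
      (\<Sum>k<N. (weight i k t * ve k t / ve i t) *\<^sub>R (v_hat k t - v_hat i t))) (at t within {0..})"
proof -
  have ve_nz: "ve k t \<noteq> 0" if "k < N" for k using ve_pos[OF that assms(2)] by simp
  have "((\<lambda>t. 1 / ve i t) has_real_derivative - ve_rate i t / (ve i t)\<^sup>2) (at t within {0..})"
    using ve_has_derivative[OF assms] ve_nz[OF assms(1)]
    by (auto intro!: derivative_eq_intros simp: power2_eq_square)
  from has_vector_derivative_scaleR[OF this v_has_derivative[OF assms]]
  have "(v_hat i has_vector_derivative
      (1 / ve i t) *\<^sub>R v_rate i t - (ve_rate i t / (ve i t)\<^sup>2) *\<^sub>R v i t) (at t within {0..})"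
    by (simp add: v_hat_def[abs_def])
  also have "(1 / ve i t) *\<^sub>R v_rate i t - (ve_rate i t / (ve i t)\<^sup>2) *\<^sub>R v i t
      = (\<Sum>k<N. (weight i k t * ve k t / ve i t) *\<^sub>R (v_hat k t - v_hat i t))"
    unfolding v_rate_def ve_rate_def v_hat_def
    by (rule normalised_consensus_eq) (use ve_nz assms(1) in auto)
  finally show ?thesis .
qed

lemma diam_eq_Max:
  "diam N x t = Max ((\<lambda>ij. norm (x (fst ij) t - x (snd ij) t)) ` ({..<N} \<times> {..<N}))"
proof -
  have "{norm (x i t - x j t) | i j. i < N \<and> j < N}
      = (\<lambda>ij. norm (x (fst ij) t - x (snd ij) t)) ` ({..<N} \<times> {..<N})"
    by force
  then show ?thesis by (simp add: diam_def)
qed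

lemma norm_le_diam: "i < N \<Longrightarrow> j < N \<Longrightarrow> norm (x i t - x j t) \<le> diam N x t"
  unfolding diam_eq_Max by (rule Max_ge) force+

lemma continuous_on_diam: "continuous_on {0..} (diam N x)"
proof -
  have x_cont: "continuous_on {0..} (x i)" if "i < N" for i
    unfolding continuous_on_eq_continuous_within
    using x_has_derivative[OF that] by (blast intro: has_vector_derivative_continuous)
  show ?thesis
    unfolding diam_eq_Max[abs_def] using N_pos
    by (intro continuous_on_Max) (auto intro!: continuous_intros x_cont)
qed

lemma diam_nonneg: "0 \<le> diam N x t"
  using order_trans[OF norm_ge_zero norm_le_diam[OF N_pos N_pos]] .

lemma \<phi>_diam_pos: "0 < \<phi> (diam N x t)"
  using \<phi>_pos diam_nonneg by blast

lemma weight_ratio_lower_bound: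
  obtains c where "0 < c"
    "\<And>i k t. i < N \<Longrightarrow> k < N \<Longrightarrow> 0 \<le> t \<Longrightarrow> c * \<phi> (diam N x t) \<le> weight i k t * ve k t / ve i t"
proof -
  obtain L where "0 < L" and L: "\<And>i t. i < N \<Longrightarrow> 0 \<le> t \<Longrightarrow> L \<le> ve i t"
    using ve_lower_bound by metis
  obtain W where W: "\<And>i t. i < N \<Longrightarrow> 0 \<le> t \<Longrightarrow> ve i t \<le> W"
    using ve_upper_bound by metis
  define m0 where "m0 = Min (m ` {..<N})"
  have "m0 \<in> m ` {..<N}" using N_pos by (auto simp: m0_def intro!: Min_in)
  then have "0 < m0" using m_pos by auto
  have "0 < W" using L[OF N_pos order.refl] W[OF N_pos order.refl] \<open>0 < L\<close> by linarith
  show ?thesis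
  proof (rule that)
    show "0 < m0 * L / W" using \<open>0 < m0\<close> \<open>0 < L\<close> \<open>0 < W\<close> by simp
    fix i k and t :: real assume "i < N" "k < N" "0 \<le> t"
    have "m0 * \<phi> (diam N x t) \<le> weight i k t"
      unfolding weight_def using \<open>i < N\<close> \<open>k < N\<close> m_pos \<phi>_mono norm_le_diam[of i k t] \<phi>_diam_pos[of t]
      by (intro mult_mono) (auto simp: m0_def)
    moreover have "L / W \<le> ve k t / ve i t"
      using L[of k t] W[of i t] ve_pos[of i t] \<open>0 < L\<close> \<open>i < N\<close> \<open>k < N\<close> \<open>0 \<le> t\<close>
      by (intro frac_le) auto
    ultimately have "m0 * \<phi> (diam N x t) * (L / W) \<le> weight i k t * (ve k t / ve i t)"
      using weight_nonneg[of i k t] \<open>0 < L\<close> \<open>0 < W\<close> \<open>i < N\<close> \<open>k < N\<close> by (intro mult_mono) auto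
    then show "m0 * L / W * \<phi> (diam N x t) \<le> weight i k t * ve k t / ve i t" by (simp add: mult_ac)
  qed
qed

lemma v_hat_decay:
  obtains C c where "0 < C" "0 < c"
    "\<And>i j t. i < N \<Longrightarrow> j < N \<Longrightarrow> 0 \<le> t \<Longrightarrow>
      (norm (v_hat i t - v_hat j t))\<^sup>2 < C * exp (- c * integral {0..t} (\<lambda>s. \<phi> (diam N x s)))"
proof -
  obtain c where "0 < c" and weight_ge: "\<And>i k t. i < N \<Longrightarrow> k < N \<Longrightarrow> 0 \<le> t \<Longrightarrow>
      c * \<phi> (diam N x t) \<le> weight i k t * ve k t / ve i t"
    using weight_ratio_lower_bound by metis
  define C where "C = 1 + (\<Sum>i<N. \<Sum>j<N. (norm (v_hat i 0 - v_hat j 0))\<^sup>2)"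
  have init: "(norm (v_hat i 0 - v_hat j 0))\<^sup>2 < C" if "i < N" "j < N" for i j
  proof -
    have "(norm (v_hat i 0 - v_hat j 0))\<^sup>2 \<le> (\<Sum>j<N. (norm (v_hat i 0 - v_hat j 0))\<^sup>2)"
      using that by (intro member_le_sum) auto
    also have "\<dots> \<le> (\<Sum>i<N. \<Sum>j<N. (norm (v_hat i 0 - v_hat j 0))\<^sup>2)"
      using that by (intro member_le_sum sum_nonneg) auto
    finally show ?thesis by (simp add: C_def)
  qed
  have "continuous_on {0..} (\<lambda>s. \<phi> (diam N x s))"
    using diam_nonneg by (intro continuous_on_compose2[OF \<phi>_cont continuous_on_diam]) auto
  then have cont: "continuous_on {0..} (\<lambda>s. c * \<phi> (diam N x s))" by (rule continuous_on_mult_left)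
  show ?thesis
  proof (rule that[OF _ \<open>0 < c\<close>])
    show "0 < C" using init[OF N_pos N_pos] by simp
    fix i j and t :: real assume "i < N" "j < N" "0 \<le> t"
    have "(norm (v_hat i t - v_hat j t))\<^sup>2 < C * exp (- integral {0..t} (\<lambda>s. c * \<phi> (diam N x s)))"
    proof (rule consensus_sq_dist_decay[OF _ _ cont, where K = "{..<N}" and A = "\<lambda>i k t. weight i k t * ve k t / ve i t"])
      show "(v_hat k has_vector_derivative (\<Sum>l\<in>{..<N}. (weight k l s * ve l s / ve k s) *\<^sub>R (v_hat l s - v_hat k s)))
          (at s within {0..})" if "k \<in> {..<N}" "0 \<le> s" for k s
        using v_hat_has_derivative that by simp
    qed (use \<open>0 < c\<close> \<phi>_diam_pos weight_ge init \<open>i < N\<close> \<open>j < N\<close> \<open>0 \<le> t\<close> in simp_all)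
    then show "(norm (v_hat i t - v_hat j t))\<^sup>2 < C * exp (- c * integral {0..t} (\<lambda>s. \<phi> (diam N x s)))"
      by simp
  qed
qed

lemma max_angle_attained: obtains i j where "i < N" "j < N" "max_angle N v t = vec_angle (v i t) (v j t)"
proof -
  have "{vec_angle (v i t) (v j t) | i j. i < N \<and> j < N}
      = (\<lambda>ij. vec_angle (v (fst ij) t) (v (snd ij) t)) ` ({..<N} \<times> {..<N})"
    by force
  moreover have "({..<N} \<times> {..<N}) \<noteq> {}" using N_pos by auto
  ultimately have "max_angle N v t \<in> {vec_angle (v i t) (v j t) | i j. i < N \<and> j < N}"
    unfolding max_angle_def by (metis (no_types, lifting) Max_in finite_imageI finite_SigmaI finite_lessThan image_is_empty)
  then show ?thesis using that by blast
qed

lemma one_minus_cos_max_angle_le: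
  assumes "0 \<le> t"
  obtains i j where "i < N" "j < N" "1 - cos (max_angle N v t) \<le> (norm (v_hat i t - v_hat j t))\<^sup>2 / 2"
proof -
  obtain i j where ij: "i < N" "j < N" and max: "max_angle N v t = vec_angle (v i t) (v j t)"
    by (rule max_angle_attained)
  have "vec_angle (v i t) (v j t) = vec_angle (v_hat i t) (v_hat j t)"
    unfolding v_hat_def using ve_pos ij assms by (simp add: vec_angle_scaleR)
  then have "1 - cos (max_angle N v t) \<le> (norm (v_hat i t - v_hat j t))\<^sup>2 / 2"
    unfolding max \<open>vec_angle (v i t) (v j t) = _\<close> using inner_e_v_hat ij assms
    by (intro one_minus_cos_vec_angle_le[OF e_norm]) auto
  with ij show ?thesis by (rule that)
qed

end

theorem mainTheorem9:
  fixes N :: nat and m :: "nat \<Rightarrow> real" and \<sigma> p \<kappa> :: real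
    and \<phi> :: "real \<Rightarrow> real"
    and x v :: "nat \<Rightarrow> real \<Rightarrow> 'a::euclidean_space" and \<theta> :: "nat \<Rightarrow> real \<Rightarrow> real"
  assumes N: "N \<ge> 1"
    and m_pos: "\<forall>i<N. m i > 0"
    and \<sigma>: "\<sigma> > 0" and p: "p > 0" and \<kappa>: "\<kappa> \<ge> 0"
    and \<phi>_smooth: "\<forall>k. \<forall>r. ((deriv ^^ k) \<phi>) differentiable (at r)"
    and \<phi>_pos: "\<forall>r\<ge>0. \<phi> r > 0"
    and \<phi>_mono: "\<forall>r s. 0 \<le> r \<longrightarrow> r \<le> s \<longrightarrow> \<phi> s \<le> \<phi> r"
    and sol: "CSF_solution N m \<sigma> p \<kappa> \<phi> x v \<theta>"
    and \<theta>0: "\<forall>i<N. \<theta> i 0 > 0"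
    and sect: "sectorial N v"
  shows "\<exists>C c. C > 0 \<and> c > 0 \<and>
           (\<forall>t\<ge>0. 1 - cos (max_angle N v t)
              \<le> C * exp (- c * (\<Sum>i<N. m i) * integral {0..t} (\<lambda>s. \<phi> (diam N x s))))"
proof -
  obtain e where e: "norm e = 1" "\<forall>i<N. inner e (v i 0) > 0"
    using sect unfolding sectorial_def by blast
  have "continuous_on {0..} \<phi>"
    using \<phi>_smooth[rule_format, of 0]
    by (simp add: continuous_at_imp_continuous_on differentiable_imp_continuous_within)
  then interpret sectorial_CSF N m \<sigma> p \<kappa> \<phi> x v \<theta> e
    using N m_pos \<sigma> p \<kappa> \<phi>_pos \<phi>_mono sol \<theta>0 e by unfold_locales auto
  obtain C c where "0 < C" "0 < c" and decay: "\<And>i j t. i < N \<Longrightarrow> j < N \<Longrightarrow> 0 \<le> t \<Longrightarrow>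
      (norm (v_hat i t - v_hat j t))\<^sup>2 < C * exp (- c * integral {0..t} (\<lambda>s. \<phi> (diam N x s)))"
    using v_hat_decay by blast
  have "0 < (\<Sum>i<N. m i)" using N m_pos by (intro sum_pos) (auto simp: lessThan_empty_iff)
  have "1 - cos (max_angle N v t)
      \<le> C / 2 * exp (- (c / (\<Sum>i<N. m i)) * (\<Sum>i<N. m i) * integral {0..t} (\<lambda>s. \<phi> (diam N x s)))"
    if t: "0 \<le> t" for t
  proof -
    obtain i j where "i < N" "j < N"
      and "1 - cos (max_angle N v t) \<le> (norm (v_hat i t - v_hat j t))\<^sup>2 / 2"
      using one_minus_cos_max_angle_le[OF t] by blast
    then show ?thesis using decay[of i j t] t \<open>0 < (\<Sum>i<N. m i)\<close> by simp
  qed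
  moreover have "0 < C / 2" "0 < c / (\<Sum>i<N. m i)"
    using \<open>0 < C\<close> \<open>0 < c\<close> \<open>0 < (\<Sum>i<N. m i)\<close> by simp_all
  ultimately show ?thesis by blast
qed

end
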